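(* In the setting described in the context, fix $x^*\in X^*$, choose an initial point $x_0$, target accuracy $0<\epsilon\leq2\|x_0-x^*\|_L^2$, confidence $0<\rho<1$, and $$k\geq\frac{4n\|x_0-x^*\|_L^2}{\epsilon}\log\left(\frac{2(F(x_0)-F^* )}{\rho\epsilon}\right).$$ Let $F_\mu(x)=F(x)+\frac\mu2\|x-x_0\|_L^2$ with $\mu=\frac{\epsilon}{\|x_0-x^*\|_L^2}$, viewed as the composite function $f+\Psi_\mu$ with $\Psi_\mu(x)=\Psi(x)+\frac\mu2\|x-x_0\|_L^2$. If $x_k$ is the random point generated by UCDC$(x_0)$ applied to $F_\mu$, then $\mathbf{P}(F(x_k)-F^*\leq\epsilon)\geq1-\rho$.
   Context: Let $U\in\mathbf{R}^{N\times N}$ be a column permutation of the $N\times N$ identity matrix, partitioned as $U=[U_1,\dots,U_n]$ with $U_i\in\mathbf{R}^{N\times N_i}$, $\sum_iN_i=N$. For $x\in\mathbf{R}^N$ write $x^{(i)}=U_i^Tx$. Each $\mathbf{R}^{N_i}$ carries the norm $\|t\|_{(i)}=\langle B_it,t\rangle^{1/2}$ and dual norm $\|t\|_{(i)}^*=\langle B_i^{-1}t,t\rangle^{1/2}$ with $B_i$ positive definite. Consider $F(x)=f(x)+\Psi(x)$ on $\mathbf{R}^N$, where $f$ is convex and differentiable with $\|\nabla_if(x+U_it)-\nabla_if(x)\|_{(i)}^*\leq L_i\|t\|_{(i)}$ for all $x,t,i$ (constants $L_i>0$, $\nabla_if(x)=U_i^T\nabla f(x)$), and $\Psi(x)=\sum_i\Psi_i(x^{(i)})$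 with each $\Psi_i$ proper closed convex. $F$ has a minimizer; $F^*$ is the minimum value and $X^*$ the set of minimizers. $\|x\|_L=(\sum_iL_i\|x^{(i)}\|_{(i)}^2)^{1/2}$. For a composite function $f+\Phi$ with $\Phi(x)=\sum_i\Phi_i(x^{(i)})$ block separable, UCDC$(x_0)$ is: for $k=0,1,2,\dots$, choose $i\in\{1,\dots,n\}$ uniformly at random (independently), compute $T^{(i)}(x_k)=\arg\min_{t\in\mathbf{R}^{N_i}}\{\langle\nabla_if(x_k),t\rangle+\frac{L_i}{2}\|t\|_{(i)}^2+\Phi_i(x_k^{(i)}+t)\}$ and set $x_{k+1}=x_k+U_iT^{(i)}(x_k)$. *)

theory Defs
  imports "HOL-Analysis.Analysis" "HOL-Probability.Probability"
begin

text \<open>The coordinate set of R^N is the finite type 'n. The column permutation U = [U_1,...,U_n]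
  is encoded by a partition of the coordinates into blocks S 0, ..., S (n-1) (block i consists of
  the coordinates picked out by U_i). A vector t of R^{N_i} is identified with the vector
  U_i t of R^N, i.e. with an element of blockspace (S i); x^(i) = U_i^T x corresponds to blk (S i) x.\<close>

definition block_partition :: "nat \<Rightarrow> (nat \<Rightarrow> 'n set) \<Rightarrow> bool" where
  "block_partition n S \<longleftrightarrow> (\<forall>i<n. \<forall>j<n. i \<noteq> j \<longrightarrow> S i \<inter> S j = {}) \<and> (\<Union>i<n. S i) = UNIV"

definition blockspace :: "'n set \<Rightarrow> (real^'n) set" where
  "blockspace S = {t. \<forall>j. j \<notin> S \<longrightarrow> t $ j = 0}"

definition blk :: "'n set \<Rightarrow> real^'n \<Rightarrow> real^'n" where
  "blk S x = (\<chi> j. if j \<in> S then x $ j else 0)"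

definition qform :: "real^'n^'n \<Rightarrow> 'n set \<Rightarrow> real^'n \<Rightarrow> real" where
  "qform B S t = (\<Sum>a\<in>S. \<Sum>b\<in>S. B $ a $ b * t $ a * t $ b)"

definition bnorm :: "real^'n^'n \<Rightarrow> 'n set \<Rightarrow> real^'n \<Rightarrow> real" where
  "bnorm B S t = sqrt (qform B S t)"

definition pos_def_on :: "'n set \<Rightarrow> real^'n^'n \<Rightarrow> bool" where
  "pos_def_on S B \<longleftrightarrow> (\<forall>a\<in>S. \<forall>b\<in>S. B $ a $ b = B $ b $ a)
     \<and> (\<forall>t\<in>blockspace S. t \<noteq> 0 \<longrightarrow> qform B S t > 0)"

definition inverse_on :: "'n set \<Rightarrow> real^'n^'n \<Rightarrow> real^'n^'n \<Rightarrow> bool" where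
  "inverse_on S B Bi \<longleftrightarrow> (\<forall>a\<in>S. \<forall>c\<in>S. (\<Sum>b\<in>S. B $ a $ b * Bi $ b $ c) = (if a = c then 1 else 0))"

definition proper_closed_convex_on :: "'n set \<Rightarrow> (real^'n \<Rightarrow> ereal) \<Rightarrow> bool" where
  "proper_closed_convex_on S \<phi> \<longleftrightarrow>
     (\<forall>t\<in>blockspace S. \<phi> t \<noteq> -\<infinity>) \<and> (\<exists>t\<in>blockspace S. \<phi> t \<noteq> \<infinity>)
     \<and> convex {(t, y::real). t \<in> blockspace S \<and> \<phi> t \<le> ereal y}
     \<and> closed {(t, y::real). t \<in> blockspace S \<and> \<phi> t \<le> ereal y}"

definition Lnorm :: "nat \<Rightarrow> (nat \<Rightarrow> 'n set) \<Rightarrow> (nat \<Rightarrow> real^'n^'n) \<Rightarrow> (nat \<Rightarrow> real) \<Rightarrow> real^'n \<Rightarrow> real" where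
  "Lnorm n S B L x = sqrt (\<Sum>i<n. L i * (bnorm (B i) (S i) (blk (S i) x))^2)"

text \<open>T^(i)(x) for the composite function f + \<Phi>, \<Phi>(x) = sum_i \<Phi>_i(x^(i)); gf is the gradient of f.\<close>
definition ucdc_T :: "(real^'n \<Rightarrow> real^'n) \<Rightarrow> (nat \<Rightarrow> real) \<Rightarrow> (nat \<Rightarrow> real^'n^'n) \<Rightarrow> (nat \<Rightarrow> 'n set)
    \<Rightarrow> (nat \<Rightarrow> real^'n \<Rightarrow> ereal) \<Rightarrow> nat \<Rightarrow> real^'n \<Rightarrow> real^'n" where
  "ucdc_T gf L B S \<Phi> i x =
     (let obj = (\<lambda>t. ereal (blk (S i) (gf x) \<bullet> t + L i / 2 * (bnorm (B i) (S i) t)^2)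
                     + \<Phi> i (blk (S i) x + t))
      in SOME t. t \<in> blockspace (S i) \<and> (\<forall>s\<in>blockspace (S i). obj t \<le> obj s))"

definition ucdc_step :: "(real^'n \<Rightarrow> real^'n) \<Rightarrow> (nat \<Rightarrow> real) \<Rightarrow> (nat \<Rightarrow> real^'n^'n) \<Rightarrow> (nat \<Rightarrow> 'n set)
    \<Rightarrow> (nat \<Rightarrow> real^'n \<Rightarrow> ereal) \<Rightarrow> real^'n \<Rightarrow> nat \<Rightarrow> real^'n" where
  "ucdc_step gf L B S \<Phi> x i = x + ucdc_T gf L B S \<Phi> i x"

definition ucdc_run :: "(real^'n \<Rightarrow> real^'n) \<Rightarrow> (nat \<Rightarrow> real) \<Rightarrow> (nat \<Rightarrow> real^'n^'n) \<Rightarrow> (nat \<Rightarrow> 'n set)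
    \<Rightarrow> (nat \<Rightarrow> real^'n \<Rightarrow> ereal) \<Rightarrow> real^'n \<Rightarrow> nat list \<Rightarrow> real^'n" where
  "ucdc_run gf L B S \<Phi> x0 is = foldl (ucdc_step gf L B S \<Phi>) x0 is"

text \<open>The law of (i_0,...,i_{k-1}): i.i.d. uniform on {0,...,n-1}.\<close>
definition choice_seqs :: "nat \<Rightarrow> nat \<Rightarrow> nat list set" where
  "choice_seqs n k = {is. length is = k \<and> set is \<subseteq> {..<n}}"

end

theory Submission
  imports Defs
begin

text \<open>Adding \<mu>/2 ||x - x0||_L^2 to \<Psi> makes the objective \<mu>-strongly convex in the L-norm
  without changing f, so each block step is still the exact minimizer of a block model.
  Averaging the model inequality over the n equally likely blocks and comparing it with the
  convex combination of the current point and an arbitrary point y of weight \<mu>/(1+\<mu>) gives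
  the linear rate E[F_\<mu>(x_{k+1}) - F_\<mu>^*] \<le> (1 - \<mu>/((1+\<mu>)n)) (F_\<mu>(x_k) - F_\<mu>^*).
  Markov's inequality turns this into a tail bound. Finally F \<le> F_\<mu>, F_\<mu>(x0) = F(x0) and
  F_\<mu>^* \<le> F_\<mu>(x^*) = F^* + \<epsilon>/2, so F_\<mu>(x_k) - F_\<mu>^* \<le> \<epsilon>/2 forces F(x_k) - F^* \<le> \<epsilon>;
  the choice of k makes the failure probability at most \<rho>.\<close>

section \<open>Block vectors and block quadratic forms\<close>

lemma blk_in_blockspace: "blk T x \<in> blockspace T"
  by (simp add: blk_def blockspace_def)

lemma blk_blockspace: "t \<in> blockspace T \<Longrightarrow> blk T t = t"
  by (auto simp: blk_def blockspace_def vec_eq_iff)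

lemma blk_add: "blk T (x + y) = blk T x + blk T y"
  and blk_diff: "blk T (x - y) = blk T x - blk T y"
  and blk_scaleR: "blk T (c *\<^sub>R x) = c *\<^sub>R blk T x"
  by (simp_all add: blk_def vec_eq_iff)

lemma blockspace_add: "a \<in> blockspace T \<Longrightarrow> b \<in> blockspace T \<Longrightarrow> a + b \<in> blockspace T"
  and blockspace_diff: "a \<in> blockspace T \<Longrightarrow> b \<in> blockspace T \<Longrightarrow> a - b \<in> blockspace T"
  and blockspace_scaleR: "a \<in> blockspace T \<Longrightarrow> c *\<^sub>R a \<in> blockspace T"
  and blockspace_zero: "0 \<in> blockspace T"
  by (auto simp: blockspace_def)

lemma inner_blk_blockspace: "t \<in> blockspace T \<Longrightarrow> blk T g \<bullet> t = g \<bullet> t"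
  by (auto simp: blockspace_def blk_def inner_vec_def intro!: sum.cong)

lemma closed_blockspace: "closed (blockspace T)"
proof -
  have "blockspace T = (\<Inter>j\<in>-T. (\<lambda>x. x $ j) -` {0})" by (auto simp: blockspace_def)
  then show ?thesis by (auto intro!: closed_INT closed_vimage_vec_nth)
qed

definition bform :: "real^'n^'n \<Rightarrow> 'n set \<Rightarrow> real^'n \<Rightarrow> real^'n \<Rightarrow> real" where
  "bform B S u v = (\<Sum>a\<in>S. \<Sum>b\<in>S. B $ a $ b * u $ a * v $ b)"

lemma qform_eq_bform: "qform B S t = bform B S t t"
  by (simp add: qform_def bform_def)

lemma bform_add_left: "bform B S (u + w) v = bform B S u v + bform B S w v"
  and bform_add_right: "bform B S v (u + w) = bform B S v u + bform B S v w"
  and bform_diff_left: "bform B S (u - w) v = bform B S u v - bform B S w v"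
  and bform_diff_right: "bform B S v (u - w) = bform B S v u - bform B S v w"
  and bform_scaleR_left: "bform B S (c *\<^sub>R u) v = c * bform B S u v"
  and bform_scaleR_right: "bform B S v (c *\<^sub>R u) = c * bform B S v u"
  by (simp_all add: bform_def algebra_simps sum.distrib sum_subtractf sum_distrib_left)

lemma bform_commute:
  assumes "\<forall>a\<in>S. \<forall>b\<in>S. B $ a $ b = B $ b $ a"
  shows "bform B S u v = bform B S v u"
proof -
  have "bform B S u v = (\<Sum>b\<in>S. \<Sum>a\<in>S. B $ a $ b * u $ a * v $ b)"
    unfolding bform_def by (rule sum.swap)
  also have "\<dots> = bform B S v u" unfolding bform_def
    by (intro sum.cong refl) (use assms in \<open>simp add: mult_ac\<close>)
  finally show ?thesis .
qed

lemma qform_scaleR: "qform B S (c *\<^sub>R t) = c^2 * qform B S t"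
  by (simp add: qform_eq_bform bform_scaleR_left bform_scaleR_right power2_eq_square)

lemma qform_minus: "qform B S (- t) = qform B S t"
  using qform_scaleR[of B S "-1" t] by simp

lemma qform_convex_comb:
  assumes "\<forall>a\<in>S. \<forall>b\<in>S. B $ a $ b = B $ b $ a"
  shows "qform B S (\<alpha> *\<^sub>R x + (1 - \<alpha>) *\<^sub>R y) =
      \<alpha> * qform B S x + (1 - \<alpha>) * qform B S y - \<alpha> * (1 - \<alpha>) * qform B S (x - y)"
  using bform_commute[OF assms, of x y]
  by (simp add: qform_eq_bform bform_add_left bform_add_right bform_scaleR_left bform_scaleR_right
      bform_diff_left bform_diff_right algebra_simps power2_eq_square)

lemma continuous_on_qform: "continuous_on UNIV (qform B S)"
  unfolding qform_def by (intro continuous_intros)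

lemma qform_blk: "qform B S (blk S t) = qform B S t"
  unfolding qform_def by (intro sum.cong refl) (simp add: blk_def)

lemma qform_nonneg:
  assumes "pos_def_on S B" shows "0 \<le> qform B S t"
proof -
  have "0 \<le> qform B S (blk S t)"
    using assms blk_in_blockspace[of S t] unfolding pos_def_on_def
    by (cases "blk S t = 0") (auto simp: qform_def intro: less_imp_le)
  then show ?thesis by (simp add: qform_blk)
qed

lemma bnorm_power2: "pos_def_on S B \<Longrightarrow> (bnorm B S t)^2 = qform B S t"
  by (simp add: bnorm_def qform_nonneg)

lemma bnorm_scaleR: "0 \<le> c \<Longrightarrow> bnorm B S (c *\<^sub>R t) = c * bnorm B S t"
  by (simp add: bnorm_def qform_scaleR real_sqrt_mult)

lemma bform_cauchy_schwarz:
  assumes sym: "\<forall>a\<in>S. \<forall>b\<in>S. B $ a $ b = B $ b $ a"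
    and psd: "\<And>x. 0 \<le> bform B S x x"
  shows "(bform B S u v)^2 \<le> bform B S u u * bform B S v v"
proof -
  define A where "A = bform B S u u"
  define C where "C = bform B S v v"
  define D where "D = bform B S u v"
  have key: "0 \<le> A - 2 * l * D + l^2 * C" for l
  proof -
    have "bform B S (u - l *\<^sub>R v) (u - l *\<^sub>R v) = A - 2 * l * D + l^2 * C"
      using bform_commute[OF sym, of u v]
      by (simp add: A_def C_def D_def bform_diff_left bform_diff_right bform_scaleR_left
          bform_scaleR_right algebra_simps power2_eq_square)
    then show ?thesis using psd by metis
  qed
  show ?thesis
  proof (cases "C = 0")
    case True
    have "D = 0"
    proof (rule ccontr)
      assume "D \<noteq> 0"
      have "0 \<le> A - 2 * ((A + 1) / (2 * D)) * D + ((A + 1) / (2 * D))^2 * C" by (rule key)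
      then show False using True \<open>D \<noteq> 0\<close> by (simp add: field_simps)
    qed
    then show ?thesis using True by (simp add: A_def C_def D_def)
  next
    case False
    then have Cp: "C > 0" using psd[of v] by (simp add: C_def)
    have "0 \<le> A - 2 * (D / C) * D + (D / C)^2 * C" by (rule key)
    then have "D^2 \<le> A * C" using Cp by (simp add: field_simps power2_eq_square)
    then show ?thesis by (simp add: A_def C_def D_def)
  qed
qed

lemma bform_le_sqrt_qform:
  assumes "pos_def_on S B"
  shows "bform B S u v \<le> sqrt (qform B S u) * sqrt (qform B S v)"
proof -
  have "(bform B S u v)^2 \<le> qform B S u * qform B S v"
    using bform_cauchy_schwarz[of S B] qform_nonneg[OF assms] assms
    by (simp add: qform_eq_bform pos_def_on_def)
  then have "\<bar>bform B S u v\<bar> \<le> sqrt (qform B S u * qform B S v)"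
    using real_sqrt_le_mono by fastforce
  then show ?thesis by (simp add: real_sqrt_mult)
qed

text \<open>With u the block vector (B^-1 g)|_S one has g \<bullet> t = <B t, u> and <B u, u> = <B^-1 g, g>,
  so this is Cauchy-Schwarz for <B _, _>.\<close>
lemma inner_le_dual_qform:
  assumes pd: "pos_def_on S B" and inv: "inverse_on S B Bi" and t: "t \<in> blockspace S"
  shows "g \<bullet> t \<le> sqrt (qform Bi S g) * sqrt (qform B S t)"
proof -
  define u where "u = (\<chi> b. if b \<in> S then (\<Sum>c\<in>S. Bi $ b $ c * g $ c) else 0)"
  have Bu: "(\<Sum>b\<in>S. B $ a $ b * u $ b) = g $ a" if a: "a \<in> S" for a
  proof -
    have "(\<Sum>b\<in>S. B $ a $ b * u $ b) = (\<Sum>b\<in>S. \<Sum>c\<in>S. B $ a $ b * Bi $ b $ c * g $ c)"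
      by (simp add: u_def sum_distrib_left mult_ac)
    also have "\<dots> = (\<Sum>c\<in>S. (\<Sum>b\<in>S. B $ a $ b * Bi $ b $ c) * g $ c)"
      by (subst sum.swap) (simp add: sum_distrib_right)
    also have "\<dots> = (\<Sum>c\<in>S. if a = c then g $ c else 0)"
      using inv a unfolding inverse_on_def by (intro sum.cong refl) simp
    finally show ?thesis using a by simp
  qed
  have "g \<bullet> t = (\<Sum>a\<in>UNIV. g $ a * t $ a)" by (simp add: inner_vec_def)
  also have "\<dots> = (\<Sum>a\<in>S. g $ a * t $ a)"
    using t by (intro sum.mono_neutral_right) (auto simp: blockspace_def)
  also have "\<dots> = bform B S t u" unfolding bform_def
    by (simp add: Bu[symmetric] sum_distrib_right sum_distrib_left mult_ac)
  finally have gt: "g \<bullet> t = bform B S t u" .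
  have "qform B S u = (\<Sum>a\<in>S. u $ a * (\<Sum>b\<in>S. B $ a $ b * u $ b))"
    unfolding qform_def by (simp add: sum_distrib_left mult_ac)
  also have "\<dots> = (\<Sum>a\<in>S. u $ a * g $ a)" by (intro sum.cong refl) (simp add: Bu)
  also have "\<dots> = qform Bi S g" unfolding qform_def u_def
    by (simp add: sum_distrib_right sum_distrib_left mult_ac)
  finally show ?thesis using bform_le_sqrt_qform[OF pd, of t u] gt by (simp add: mult.commute)
qed

lemma qform_ge_norm_power2:
  assumes pd: "pos_def_on S B"
  obtains lam where "lam > 0" "\<And>t. t \<in> blockspace S \<Longrightarrow> lam * (norm t)^2 \<le> qform B S t"
proof -
  define K where "K = blockspace S \<inter> sphere 0 1"
  have cK: "compact K" unfolding K_def
    by (intro closed_Int_compact compact_sphere closed_blockspace)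
  obtain lam where lam: "lam > 0" "\<And>k. k \<in> K \<Longrightarrow> lam \<le> qform B S k"
  proof (cases "K = {}")
    case False
    obtain k where "k \<in> K" "\<And>t. t \<in> K \<Longrightarrow> qform B S k \<le> qform B S t"
      using continuous_attains_inf[OF cK False continuous_on_subset[OF continuous_on_qform]] by blast
    moreover have "qform B S k > 0" using pd \<open>k \<in> K\<close> unfolding pos_def_on_def K_def by auto
    ultimately show ?thesis using that by blast
  qed (use that[of 1] in simp)
  have "lam * (norm t)^2 \<le> qform B S t" if t: "t \<in> blockspace S" for t
  proof (cases "t = 0")
    case False
    have "(1 / norm t) *\<^sub>R t \<in> K" using t False by (auto simp: K_def blockspace_def)
    then have "lam \<le> qform B S ((1 / norm t) *\<^sub>R t)" by (rule lam(2))
    also have "\<dots> = qform B S t / (norm t)^2" by (simp add: qform_scaleR power_divide)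
    finally show ?thesis using False by (simp add: field_simps)
  qed (simp add: qform_def)
  with lam(1) show ?thesis by (rule that)
qed

section \<open>Existence of the block minimizers\<close>

lemma closed_convex_epigraph_affine_minorant:
  fixes V :: "'a::euclidean_space set" and \<psi> :: "'a \<Rightarrow> ereal"
  assumes s0: "s0 \<in> V" "\<psi> s0 = ereal v0"
    and cvx: "convex {(t, z::real). t \<in> V \<and> \<psi> t \<le> ereal z}"
    and cl: "closed {(t, z::real). t \<in> V \<and> \<psi> t \<le> ereal z}"
    and ninf: "\<forall>s\<in>V. \<psi> s \<noteq> -\<infinity>"
  obtains w c where "\<And>s. s \<in> V \<Longrightarrow> ereal (w \<bullet> s + c) \<le> \<psi> s"
proof -
  define E where "E = {(t, z::real). t \<in> V \<and> \<psi> t \<le> ereal z}"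
  have "(s0, v0 - 1) \<notin> E" using s0 by (auto simp: E_def)
  then obtain w \<beta> where w: "inner w (s0, v0 - 1) < \<beta>" "\<forall>x\<in>E. inner w x > \<beta>"
    using separating_hyperplane_closed_point[of E "(s0, v0 - 1)"] cvx cl unfolding E_def by blast
  obtain w1 w2 where ww: "w = (w1, w2)" by (cases w)
  have "(s0, v0) \<in> E" using s0 by (auto simp: E_def)
  then have "w1 \<bullet> s0 + w2 * v0 > \<beta>" "w1 \<bullet> s0 + w2 * (v0 - 1) < \<beta>" using w ww by auto
  then have w2: "w2 > 0" by (simp add: algebra_simps)
  have "ereal ((- (1 / w2)) *\<^sub>R w1 \<bullet> s + \<beta> / w2) \<le> \<psi> s" if s: "s \<in> V" for s
  proof (cases "\<psi> s")
    case (real z)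
    then have "(s, z) \<in> E" using s by (auto simp: E_def)
    then have "w1 \<bullet> s + w2 * z > \<beta>" using w ww by auto
    then show ?thesis using real w2 by (simp add: field_simps)
  qed (use ninf s in simp_all)
  then show ?thesis by (rule that)
qed

lemma closed_epigraph_coercive_attains_min:
  fixes g :: "'a::euclidean_space \<Rightarrow> ereal"
  assumes closed: "closed {(t, z::real). t \<in> V \<and> g t \<le> ereal z}"
    and t0: "t0 \<in> V" "g t0 = ereal c"
    and a: "a > 0"
    and lower: "\<And>t. t \<in> V \<Longrightarrow> ereal (a * (norm t)^2 - b * norm t + K) \<le> g t"
  shows "\<exists>t\<in>V. \<forall>s\<in>V. g t \<le> g s"
proof -
  define R where "R = (\<bar>b\<bar> + \<bar>K\<bar> + \<bar>c\<bar> + 1) / a + 1"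
  define lo where "lo = K - \<bar>b\<bar> * R"
  have far: "c < g s" if "s \<in> V" "norm s > R" for s
  proof -
    have "a * norm s \<ge> a * ((\<bar>b\<bar> + \<bar>K\<bar> + \<bar>c\<bar> + 1) / a)"
      using that a unfolding R_def by (intro mult_left_mono) auto
    then have "a * norm s - \<bar>b\<bar> \<ge> \<bar>K\<bar> + \<bar>c\<bar> + 1" using a by simp
    moreover have "norm s \<ge> 1" using that a unfolding R_def
      by (smt (verit) divide_nonneg_pos)
    ultimately have "norm s * (a * norm s - \<bar>b\<bar>) \<ge> 1 * (\<bar>K\<bar> + \<bar>c\<bar> + 1)"
      by (intro mult_mono) auto
    moreover have "b * norm s \<le> \<bar>b\<bar> * norm s" by (simp add: mult_right_mono)
    ultimately have "ereal c < ereal (a * (norm s)^2 - b * norm s + K)"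
      by (simp add: power2_eq_square algebra_simps)
    also have "\<dots> \<le> g s" using lower[OF that(1)] .
    finally show ?thesis .
  qed
  have near: "lo \<le> a * (norm s)^2 - b * norm s + K" if "norm s \<le> R" for s
  proof -
    have "b * norm s \<le> \<bar>b\<bar> * norm s" by (simp add: mult_right_mono)
    also have "\<dots> \<le> \<bar>b\<bar> * R" using that by (simp add: mult_left_mono)
    moreover have "0 \<le> a * (norm s)^2" using a by simp
    ultimately show ?thesis unfolding lo_def by linarith
  qed
  define E where "E = {(t, z). t \<in> V \<and> g t \<le> ereal z} \<inter> (cball 0 R \<times> {lo..c})"
  have "compact E" unfolding E_def
    by (intro closed_Int_compact closed compact_Times compact_cball compact_Icc)
  moreover have "(t0, c) \<in> E"
  proof -
    have "norm t0 \<le> R" using far[OF t0(1)] t0(2) by force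
    moreover have "lo \<le> c" using near[OF \<open>norm t0 \<le> R\<close>] lower[OF t0(1)] t0(2) by simp
    ultimately show ?thesis using t0 by (simp add: E_def)
  qed
  ultimately obtain p where "p \<in> E" and pmin: "\<And>q. q \<in> E \<Longrightarrow> snd p \<le> snd q"
    using continuous_attains_inf[of E snd] continuous_on_snd[OF continuous_on_id] by blast
  then obtain tm zm where tm: "tm \<in> V" "g tm \<le> ereal zm" "zm \<le> c" and p: "p = (tm, zm)"
    by (auto simp: E_def)
  have "g tm \<le> g s" if s: "s \<in> V" for s
  proof (cases "g s < ereal c")
    case False
    have "g tm \<le> ereal zm" by (rule tm(2))
    also have "\<dots> \<le> ereal c" using tm(3) by simp
    also have "\<dots> \<le> g s" using False by simp
    finally show ?thesis .
  next
    case True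
    then obtain z where z: "g s = ereal z"
      using lower[OF s] by (cases "g s") auto
    have "norm s \<le> R" using far[OF s] True by force
    then have "(s, z) \<in> E" using near[of s] lower[OF s] True s by (simp add: E_def z)
    then have "zm \<le> z" using pmin p by fastforce
    have "g tm \<le> ereal zm" by (rule tm(2))
    also have "\<dots> \<le> g s" using \<open>zm \<le> z\<close> z by simp
    finally show ?thesis .
  qed
  then show ?thesis using tm by blast
qed

lemma ereal_add_le_ereal_iff: "ereal a + P \<le> ereal z \<longleftrightarrow> P \<le> ereal (z - a)"
  by (cases P) auto

lemma quadratic_plus_closed_convex_attains_min:
  fixes V :: "'a::euclidean_space set" and \<psi> :: "'a \<Rightarrow> ereal" and h :: "'a \<Rightarrow> real"
  assumes V: "\<And>a b. a \<in> V \<Longrightarrow> b \<in> V \<Longrightarrow> a + b \<in> V"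
      "\<And>a b. a \<in> V \<Longrightarrow> b \<in> V \<Longrightarrow> a - b \<in> V"
    and y: "y \<in> V"
    and proper: "\<forall>s\<in>V. \<psi> s \<noteq> -\<infinity>" "\<exists>s\<in>V. \<psi> s \<noteq> \<infinity>"
    and cvx: "convex {(t, z::real). t \<in> V \<and> \<psi> t \<le> ereal z}"
    and cl: "closed {(t, z::real). t \<in> V \<and> \<psi> t \<le> ereal z}"
    and h: "continuous_on UNIV h" "a > 0" "\<And>t. t \<in> V \<Longrightarrow> a * (norm t)^2 - b * norm t \<le> h t"
  shows "\<exists>t\<in>V. \<forall>s\<in>V. ereal (h t) + \<psi> (y + t) \<le> ereal (h s) + \<psi> (y + s)"
proof -
  obtain s0 v0 where s0: "s0 \<in> V" "\<psi> s0 = ereal v0"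
    using proper by (metis ereal_cases)
  obtain w c where minor: "\<And>s. s \<in> V \<Longrightarrow> ereal (w \<bullet> s + c) \<le> \<psi> s"
    using closed_convex_epigraph_affine_minorant[OF s0 cvx cl proper(1)] by blast
  have yV: "y + t \<in> V \<longleftrightarrow> t \<in> V" for t
    using V(1)[OF y, of t] V(2)[of "y + t" y] y by auto
  define G where "G p = (y + fst p, snd p - h (fst p))" for p :: "'a \<times> real"
  have "continuous_on UNIV G"
    unfolding G_def by (intro continuous_intros continuous_on_compose2[OF h(1)]) auto
  then have "closed (G -` {(t, z). t \<in> V \<and> \<psi> t \<le> ereal z})"
    using cl closed_vimage by blast
  also have "G -` {(t, z). t \<in> V \<and> \<psi> t \<le> ereal z}
      = {(t, z). t \<in> V \<and> ereal (h t) + \<psi> (y + t) \<le> ereal z}"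
    by (auto simp: G_def yV ereal_add_le_ereal_iff)
  finally have "closed {(t, z). t \<in> V \<and> ereal (h t) + \<psi> (y + t) \<le> ereal z}" .
  moreover have "ereal (a * (norm t)^2 - (b + norm w) * norm t + (w \<bullet> y + c))
      \<le> ereal (h t) + \<psi> (y + t)" if t: "t \<in> V" for t
  proof -
    have "- (norm w * norm t) \<le> w \<bullet> t" using norm_cauchy_schwarz[of "-w" t] by simp
    then have "ereal (a * (norm t)^2 - (b + norm w) * norm t + (w \<bullet> y + c))
        \<le> ereal (h t) + ereal (w \<bullet> (y + t) + c)"
      using h(3)[OF t] by (simp add: algebra_simps inner_add_right)
    also have "\<dots> \<le> ereal (h t) + \<psi> (y + t)" using minor[of "y + t"] t yV by (intro add_left_mono) auto
    finally show ?thesis .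
  qed
  moreover have "s0 - y \<in> V" "ereal (h (s0 - y)) + \<psi> (y + (s0 - y)) = ereal (h (s0 - y) + v0)"
    using V(2)[OF s0(1) y] s0 by auto
  ultimately show ?thesis
    using closed_epigraph_coercive_attains_min[where g = "\<lambda>t. ereal (h t) + \<psi> (y + t)"] h(2) by blast
qed

section \<open>Uniformly random block sequences\<close>

lemma choice_seqs_Suc:
  "choice_seqs n (Suc k) = (\<lambda>(xs, i). xs @ [i]) ` (choice_seqs n k \<times> {..<n})"
proof
  show "choice_seqs n (Suc k) \<subseteq> (\<lambda>(xs, i). xs @ [i]) ` (choice_seqs n k \<times> {..<n})"
  proof
    fix xs assume xs: "xs \<in> choice_seqs n (Suc k)"
    then obtain ys i where "xs = ys @ [i]" "length ys = k"
      by (auto simp: choice_seqs_def length_Suc_conv_rev)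
    with xs show "xs \<in> (\<lambda>(xs, i). xs @ [i]) ` (choice_seqs n k \<times> {..<n})"
      by (auto simp: choice_seqs_def)
  qed
qed (auto simp: choice_seqs_def)

lemma choice_seqs_eq_lists: "choice_seqs n k = {xs. set xs \<subseteq> {..<n} \<and> length xs = k}"
  by (auto simp: choice_seqs_def)

lemma finite_choice_seqs: "finite (choice_seqs n k)"
  by (simp add: choice_seqs_eq_lists finite_lists_length_eq)

lemma card_choice_seqs: "card (choice_seqs n k) = n ^ k"
  by (simp add: choice_seqs_eq_lists card_lists_length_eq)

lemma sum_choice_seqs_Suc:
  "(\<Sum>xs\<in>choice_seqs n (Suc k). h xs) = (\<Sum>xs\<in>choice_seqs n k. \<Sum>i<n. h (xs @ [i]))"
proof -
  have "inj_on (\<lambda>(xs, i). xs @ [i]) (choice_seqs n k \<times> {..<n})"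
    by (auto simp: inj_on_def)
  then show ?thesis
    by (simp add: choice_seqs_Suc sum.reindex sum.cartesian_product')
qed

lemma sum_sum_Diff_singleton:
  fixes a :: "nat \<Rightarrow> real"
  shows "(\<Sum>i<n. \<Sum>j\<in>{..<n}-{i}. a j) = (real n - 1) * (\<Sum>j<n. a j)"
proof -
  have "(\<Sum>i<n. \<Sum>j\<in>{..<n}-{i}. a j) = (\<Sum>i<n. (\<Sum>j<n. a j) - a i)"
    by (intro sum.cong refl) (simp add: sum_diff1)
  then show ?thesis by (simp add: sum_subtractf algebra_simps)
qed

lemma prob_pmf_of_set_Markov:
  fixes g :: "'a \<Rightarrow> real" and d :: real
  assumes A: "finite A" "A \<noteq> {}" and nonneg: "\<And>x. x \<in> A \<Longrightarrow> 0 \<le> g x" and d: "0 < d"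
  shows "1 - (\<Sum>x\<in>A. g x) / (d * card A) \<le> measure_pmf.prob (pmf_of_set A) {x\<in>A. g x \<le> d}"
proof -
  let ?p = "pmf_of_set A"
  have "integrable ?p g" "AE x in ?p. 0 \<le> g x"
    using A nonneg by (auto simp: set_pmf_of_set[OF A(2,1)] intro!: integrable_measure_pmf_finite AE_pmfI)
  then have "measure_pmf.prob ?p {x. d \<le> g x} \<le> measure_pmf.expectation ?p g / d"
    using integral_Markov_inequality_measure[of ?p g UNIV d] d by simp
  also have "\<dots> = (\<Sum>x\<in>A. g x) / (d * card A)"
    using A by (simp add: integral_pmf_of_set)
  finally have "measure_pmf.prob ?p (UNIV - {x. g x \<le> d}) \<le> (\<Sum>x\<in>A. g x) / (d * card A)"
    by (rule order_trans[rotated]) (auto intro!: measure_pmf.finite_measure_mono)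
  moreover have "{x\<in>A. g x \<le> d} = {x. g x \<le> d} \<inter> set_pmf ?p"
    using A by auto
  ultimately show ?thesis
    using measure_pmf.prob_compl[of "{x. g x \<le> d}" ?p] by (simp add: measure_Int_set_pmf)
qed

lemma contraction_power_le:
  fixes \<mu> \<epsilon> \<rho> \<Delta> nn :: real and k :: nat
  assumes nn: "1 \<le> nn" and mu: "0 < \<mu>" "\<mu> \<le> 2" and pos: "0 < \<epsilon>" "0 < \<rho>" "0 \<le> \<Delta>"
    and k: "4 * nn / \<mu> * ln (2 * \<Delta> / (\<rho> * \<epsilon>)) \<le> real k"
  shows "(1 - \<mu> / (1 + \<mu>) / nn) ^ k * (2 * \<Delta> / \<epsilon>) \<le> \<rho>"
proof -
  define a where "a = \<mu> / (1 + \<mu>) / nn"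
  define A where "A = 2 * \<Delta> / (\<rho> * \<epsilon>)"
  have "\<mu> \<le> \<mu> * nn" using mu nn by (simp add: mult_le_cancel_left1)
  moreover have "(1 + \<mu>) * nn = nn + \<mu> * nn" by (simp add: distrib_right)
  ultimately have den: "0 < (1 + \<mu>) * nn" "\<mu> \<le> (1 + \<mu>) * nn" using mu nn by linarith+
  then have a: "0 < a" "a \<le> 1" using mu unfolding a_def divide_divide_eq_left by simp_all
  have D: "0 \<le> 2 * \<Delta> / \<epsilon>" using pos by simp
  have "(1 - a) ^ k \<le> 1 / A" if A1: "1 < A"
  proof -
    \<comment> \<open>\<mu> \<le> 2 gives a \<ge> \<mu> / (3 nn), which the factor 4 in the iteration bound absorbs\<close>
    have "\<mu> / (3 * nn) \<le> a" unfolding a_def divide_divide_eq_left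
      using mu nn den by (intro divide_left_mono mult_right_mono) auto
    then have "(4 * nn / \<mu> * ln A) * (\<mu> / (3 * nn)) \<le> real k * a"
      using k A1 mu nn by (intro mult_mono) (auto simp: A_def)
    moreover have "(4 * nn / \<mu> * ln A) * (\<mu> / (3 * nn)) = 4 / 3 * ln A"
      using mu nn by (simp add: field_simps)
    ultimately have "ln A \<le> real k * a" using A1 ln_gt_zero[OF A1] by linarith
    have "(1 - a) ^ k \<le> exp (- a) ^ k"
      using a exp_ge_add_one_self[of "- a"] by (intro power_mono) auto
    also have "\<dots> = exp (- (real k * a))" by (simp add: exp_of_nat_mult[symmetric])
    also have "\<dots> \<le> exp (- ln A)" using \<open>ln A \<le> real k * a\<close> by simp
    also have "\<dots> = 1 / A" using A1 by (simp add: exp_minus inverse_eq_divide)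
    finally show ?thesis .
  qed
  moreover have "(1 - a) ^ k \<le> 1" using a by (simp add: power_le_one)
  ultimately have "(1 - a) ^ k * (2 * \<Delta> / \<epsilon>) \<le> (if 1 < A then 1 / A else 1) * (2 * \<Delta> / \<epsilon>)"
    using D by (intro mult_right_mono) auto
  also have "\<dots> \<le> \<rho>" using pos by (auto simp: A_def field_simps)
  finally show ?thesis by (simp add: a_def)
qed

section \<open>The composite problem and its regularization\<close>

locale block_composite =
  fixes n :: nat and S :: "nat \<Rightarrow> 'n::finite set"
    and B Binv :: "nat \<Rightarrow> real^'n^'n" and L :: "nat \<Rightarrow> real"
    and f :: "real^'n \<Rightarrow> real" and gf :: "real^'n \<Rightarrow> real^'n"
    and \<Psi> :: "nat \<Rightarrow> real^'n \<Rightarrow> ereal"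
  assumes part: "block_partition n S"
    and Bpd: "\<forall>i<n. pos_def_on (S i) (B i)"
    and Binv: "\<forall>i<n. inverse_on (S i) (B i) (Binv i)"
    and Lpos: "\<forall>i<n. L i > 0"
    and fconv: "convex_on UNIV f"
    and fgrad: "\<forall>x. (f has_derivative (\<lambda>h. gf x \<bullet> h)) (at x)"
    and fLip: "\<forall>i<n. \<forall>x. \<forall>t\<in>blockspace (S i).
                 sqrt (qform (Binv i) (S i) (blk (S i) (gf (x + t)) - blk (S i) (gf x)))
                   \<le> L i * bnorm (B i) (S i) t"
    and \<Psi>pcc: "\<forall>i<n. proper_closed_convex_on (S i) (\<Psi> i)"
begin

lemma blocks_disjoint: "i < n \<Longrightarrow> j < n \<Longrightarrow> i \<noteq> j \<Longrightarrow> S i \<inter> S j = {}"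
  using part unfolding block_partition_def by simp

lemma ex_block: "\<exists>i<n. j \<in> S i"
  using part unfolding block_partition_def by blast

lemma n_pos: "0 < n"
  using ex_block[of undefined] by auto

lemma sum_if_in_block: "(\<Sum>i<n. if j \<in> S i then c else 0) = (c::real)"
proof -
  obtain i0 where i0: "i0 < n" "j \<in> S i0" using ex_block by blast
  then have "j \<in> S i \<longleftrightarrow> i = i0" if "i < n" for i
    using blocks_disjoint[OF that i0(1)] by blast
  then have "(\<Sum>i<n. if j \<in> S i then c else 0) = (\<Sum>i<n. if i = i0 then c else 0)"
    by (intro sum.cong) auto
  then show ?thesis using i0 by simp
qed

lemma sum_inner_blk: "(\<Sum>i<n. blk (S i) g \<bullet> blk (S i) d) = g \<bullet> d"
proof -
  have "(\<Sum>i<n. blk (S i) g \<bullet> blk (S i) d) = (\<Sum>i<n. \<Sum>j\<in>UNIV. if j \<in> S i then g$j * d$j else 0)"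
    by (simp add: inner_vec_def blk_def if_distrib cong: if_cong)
  also have "\<dots> = (\<Sum>j\<in>UNIV. \<Sum>i<n. if j \<in> S i then g$j * d$j else 0)"
    by (rule sum.swap)
  finally show ?thesis by (simp add: sum_if_in_block inner_vec_def)
qed

lemma blk_add_blockspace:
  assumes "i < n" "j < n" "t \<in> blockspace (S i)"
  shows "blk (S j) (x + t) = (if j = i then blk (S i) x + t else blk (S j) x)"
proof -
  have "blk (S j) t = 0" if "j \<noteq> i"
    using assms blocks_disjoint[of i j] that by (auto simp: blk_def blockspace_def vec_eq_iff)
  then show ?thesis using assms(3) by (auto simp: blk_add blk_blockspace)
qed

lemma has_real_derivative_f_line:
  "((\<lambda>s. f (x + s *\<^sub>R t)) has_real_derivative (gf (x + s *\<^sub>R t) \<bullet> t)) (at s)"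
proof -
  have "((\<lambda>s. x + s *\<^sub>R t) has_derivative (\<lambda>d. d *\<^sub>R t)) (at s)"
    by (auto intro!: derivative_eq_intros)
  then have "((\<lambda>s. f (x + s *\<^sub>R t)) has_derivative (\<lambda>d. gf (x + s *\<^sub>R t) \<bullet> (d *\<^sub>R t))) (at s)"
    using has_derivative_compose fgrad by blast
  then show ?thesis
    by (rule has_derivative_imp_has_field_derivative) (simp add: mult.commute)
qed

text \<open>The derivative of
  s \<mapsto> f(x + s t) - s <gf x, t> - L_i s^2 ||t||^2 / 2 is nonpositive on [0, 1], by the dual-norm
  inequality and the block Lipschitz condition.\<close>
lemma f_block_descent:
  assumes i: "i < n" and t: "t \<in> blockspace (S i)"
  shows "f (x + t) \<le> f x + gf x \<bullet> t + L i / 2 * qform (B i) (S i) t"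
proof -
  define q where "q = qform (B i) (S i) t"
  define h where "h s = f (x + s *\<^sub>R t) - f x - s * (gf x \<bullet> t) - L i / 2 * s^2 * q" for s
  have pd: "pos_def_on (S i) (B i)" using Bpd i by simp
  have q0: "0 \<le> q" using qform_nonneg[OF pd] by (simp add: q_def)
  have hd: "(h has_real_derivative (gf (x + s *\<^sub>R t) \<bullet> t - gf x \<bullet> t - L i * s * q)) (at s)" for s
    unfolding h_def
    by (auto intro!: derivative_eq_intros has_real_derivative_f_line simp: power2_eq_square algebra_simps)
  have "gf (x + s *\<^sub>R t) \<bullet> t - gf x \<bullet> t \<le> L i * s * q" if s: "0 \<le> s" for s
  proof -
    define g where "g = blk (S i) (gf (x + s *\<^sub>R t)) - blk (S i) (gf x)"
    have st: "s *\<^sub>R t \<in> blockspace (S i)" using t by (rule blockspace_scaleR)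
    have "gf (x + s *\<^sub>R t) \<bullet> t - gf x \<bullet> t = g \<bullet> t"
      using t by (simp add: g_def inner_diff_left inner_blk_blockspace)
    also have "\<dots> \<le> sqrt (qform (Binv i) (S i) g) * sqrt q"
      unfolding q_def using Binv i by (intro inner_le_dual_qform[OF pd _ t]) auto
    also have "\<dots> \<le> (L i * bnorm (B i) (S i) (s *\<^sub>R t)) * sqrt q"
      using fLip i st q0 unfolding g_def by (intro mult_right_mono) auto
    also have "\<dots> = L i * s * q"
      using q0 unfolding bnorm_scaleR[OF s] by (simp add: bnorm_def q_def)
    finally show ?thesis .
  qed
  then have "h 1 \<le> h 0"
    by (intro DERIV_nonpos_imp_nonincreasing[of 0 1 h]) (use hd in fastforce)+
  then show ?thesis by (simp add: h_def q_def)
qed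

lemma f_ge_tangent: "f x + gf x \<bullet> (y - x) \<le> f y"
proof -
  define \<phi> where "\<phi> s = f (x + s *\<^sub>R (y - x))" for s
  have "convex_on UNIV \<phi>"
  proof (rule convex_onI)
    fix u a b :: real assume u: "0 < u" "u < 1"
    have "\<phi> ((1 - u) *\<^sub>R a + u *\<^sub>R b)
        = f ((1 - u) *\<^sub>R (x + a *\<^sub>R (y - x)) + u *\<^sub>R (x + b *\<^sub>R (y - x)))"
      by (simp add: \<phi>_def algebra_simps)
    also have "\<dots> \<le> (1 - u) * \<phi> a + u * \<phi> b"
      unfolding \<phi>_def using u by (intro convex_onD[OF fconv]) auto
    finally show "\<phi> ((1 - u) *\<^sub>R a + u *\<^sub>R b) \<le> (1 - u) * \<phi> a + u * \<phi> b" .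
  qed simp
  then have "(gf x \<bullet> (y - x)) * (1 - 0) \<le> \<phi> 1 - \<phi> 0"
    using has_real_derivative_f_line[of x "y - x" 0]
    by (intro convex_on_imp_above_tangent) (auto simp: \<phi>_def[abs_def])
  then show ?thesis by (simp add: \<phi>_def)
qed

end

locale regularized_ucdc = block_composite +
  fixes x0 :: "real^'n" and \<mu> :: real and \<Phi> :: "nat \<Rightarrow> real^'n \<Rightarrow> ereal"
  assumes mu_pos: "0 < \<mu>"
    and Phi_def: "\<Phi> = (\<lambda>i t. \<Psi> i t + ereal (\<mu> / 2 * L i * (bnorm (B i) (S i) (t - blk (S i) x0))^2))"
begin

abbreviation qq :: "nat \<Rightarrow> real^'n \<Rightarrow> real" where
  "qq i \<equiv> qform (B i) (S i)"

abbreviation T :: "nat \<Rightarrow> real^'n \<Rightarrow> real^'n" where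
  "T \<equiv> ucdc_T gf L B S \<Phi>"

abbreviation run :: "nat list \<Rightarrow> real^'n" where
  "run \<equiv> ucdc_run gf L B S \<Phi> x0"

definition model :: "nat \<Rightarrow> real^'n \<Rightarrow> real^'n \<Rightarrow> ereal" where
  "model i x t = ereal (blk (S i) (gf x) \<bullet> t + L i / 2 * (bnorm (B i) (S i) t)^2) + \<Phi> i (blk (S i) x + t)"

lemma pos_def_B: "i < n \<Longrightarrow> pos_def_on (S i) (B i)"
  using Bpd by simp

lemma Phi_eq: "i < n \<Longrightarrow> \<Phi> i s = \<Psi> i s + ereal (\<mu> / 2 * L i * qq i (s - blk (S i) x0))"
  by (simp add: Phi_def bnorm_power2[OF pos_def_B])

lemma ex_model_minimizer:
  assumes i: "i < n"
  shows "\<exists>t\<in>blockspace (S i). \<forall>s\<in>blockspace (S i). model i x t \<le> model i x s"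
proof -
  define y where "y = blk (S i) x"
  define g where "g = blk (S i) (gf x)"
  define h where "h t = g \<bullet> t + L i / 2 * qq i t + \<mu> / 2 * L i * qq i (y + t - blk (S i) x0)" for t
  have model_eq: "model i x t = ereal (h t) + \<Psi> i (y + t)" for t
    by (cases "\<Psi> i (y + t)")
       (simp_all add: model_def Phi_eq[OF i] bnorm_power2[OF pos_def_B[OF i]] h_def y_def g_def)
  have "continuous_on UNIV h" unfolding h_def
    by (intro continuous_intros continuous_on_compose2[OF continuous_on_qform]) auto
  moreover obtain lam where lam: "0 < lam" "\<And>t. t \<in> blockspace (S i) \<Longrightarrow> lam * (norm t)^2 \<le> qq i t"
    using qform_ge_norm_power2[OF pos_def_B[OF i]] by blast
  moreover have "L i / 2 * lam * (norm t)^2 - norm g * norm t \<le> h t" if t: "t \<in> blockspace (S i)" for t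
  proof -
    have "- (norm g * norm t) \<le> g \<bullet> t"
      using norm_cauchy_schwarz[of "-g" t] by simp
    moreover have "L i / 2 * (lam * (norm t)^2) \<le> L i / 2 * qq i t"
      using lam(2)[OF t] Lpos i by (intro mult_left_mono) auto
    moreover have "0 \<le> \<mu> / 2 * L i * qq i (y + t - blk (S i) x0)"
      using mu_pos Lpos i qform_nonneg[OF pos_def_B[OF i]] by (intro mult_nonneg_nonneg) auto
    ultimately show ?thesis by (simp add: h_def algebra_simps)
  qed
  moreover have "0 < L i / 2 * lam" using Lpos i lam(1) by simp
  ultimately have "\<exists>t\<in>blockspace (S i). \<forall>s\<in>blockspace (S i).
      ereal (h t) + \<Psi> i (y + t) \<le> ereal (h s) + \<Psi> i (y + s)"
    using \<Psi>pcc i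
    by (intro quadratic_plus_closed_convex_attains_min[where a = "L i / 2 * lam" and b = "norm g"])
       (auto simp: proper_closed_convex_on_def y_def blk_in_blockspace blockspace_add blockspace_diff
         closed_blockspace)
  then show ?thesis by (simp add: model_eq)
qed

lemma T_eq_SOME:
  "T i x = (SOME t. t \<in> blockspace (S i) \<and> (\<forall>s\<in>blockspace (S i). model i x t \<le> model i x s))"
  by (simp add: ucdc_T_def model_def Let_def)

lemma T_in_blockspace: "i < n \<Longrightarrow> T i x \<in> blockspace (S i)"
  and model_T_le: "i < n \<Longrightarrow> s \<in> blockspace (S i) \<Longrightarrow> model i x (T i x) \<le> model i x s"
  using someI_ex[OF ex_model_minimizer[unfolded Bex_def]] unfolding T_eq_SOME by blast+

text \<open>The iterates of UCDC stay where every \<Psi>_i is finite; there F and F_\<mu> are real-valued.\<close>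
definition dom_Psi :: "real^'n \<Rightarrow> bool" where
  "dom_Psi x \<longleftrightarrow> (\<forall>i<n. \<Psi> i (blk (S i) x) \<noteq> \<infinity>)"

definition Psi_val :: "nat \<Rightarrow> real^'n \<Rightarrow> real" where
  "Psi_val i x = real_of_ereal (\<Psi> i (blk (S i) x))"

definition Phi_val :: "nat \<Rightarrow> real^'n \<Rightarrow> real" where
  "Phi_val i x = Psi_val i x + \<mu> / 2 * L i * qq i (blk (S i) x - blk (S i) x0)"

definition Fval :: "real^'n \<Rightarrow> real" where
  "Fval x = f x + (\<Sum>i<n. Psi_val i x)"

definition Fmu :: "real^'n \<Rightarrow> real" where
  "Fmu x = f x + (\<Sum>i<n. Phi_val i x)"

lemma Psi_eq_Psi_val:
  assumes "dom_Psi x" "i < n"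
  shows "\<Psi> i (blk (S i) x) = ereal (Psi_val i x)"
proof -
  have "\<Psi> i (blk (S i) x) \<noteq> -\<infinity>"
    using \<Psi>pcc assms(2) blk_in_blockspace unfolding proper_closed_convex_on_def by blast
  then show ?thesis using assms unfolding dom_Psi_def Psi_val_def by (cases "\<Psi> i (blk (S i) x)") auto
qed

lemma model_eq_Phi_val:
  assumes i: "i < n" and t: "t \<in> blockspace (S i)" and fin: "\<Psi> i (blk (S i) (x + t)) = ereal v"
  shows "model i x t = ereal (blk (S i) (gf x) \<bullet> t + L i / 2 * qq i t + Phi_val i (x + t))"
  using fin blk_add_blockspace[OF i i t]
  by (simp add: model_def Phi_eq[OF i] bnorm_power2[OF pos_def_B[OF i]] Phi_val_def Psi_val_def)

lemma dom_Psi_step: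
  assumes x: "dom_Psi x" and i: "i < n"
  shows "dom_Psi (x + T i x)"
proof -
  have t: "T i x \<in> blockspace (S i)" using T_in_blockspace[OF i] .
  have "model i x (T i x) \<le> model i x 0" using model_T_le[OF i blockspace_zero] .
  also have "\<dots> < \<infinity>" using Psi_eq_Psi_val[OF x i] by (simp add: model_def Phi_eq[OF i])
  finally have "\<Psi> i (blk (S i) x + T i x) \<noteq> \<infinity>" by (auto simp: model_def Phi_eq[OF i])
  then show ?thesis using x t i blk_add_blockspace[OF i _ t] unfolding dom_Psi_def by auto
qed

lemma Fmu_step_le:
  assumes x: "dom_Psi x" and z: "dom_Psi z" and i: "i < n"
  shows "Fmu (x + T i x) \<le> f x + blk (S i) (gf x) \<bullet> (blk (S i) z - blk (S i) x)
      + L i / 2 * qq i (blk (S i) z - blk (S i) x) + Phi_val i z + (\<Sum>j\<in>{..<n}-{i}. Phi_val j x)"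
proof -
  define t where "t = T i x"
  define d where "d = blk (S i) z - blk (S i) x"
  have t_in: "t \<in> blockspace (S i)" using T_in_blockspace[OF i] by (simp add: t_def)
  have d_in: "d \<in> blockspace (S i)" by (simp add: d_def blk_in_blockspace blockspace_diff)
  have blk_xd: "blk (S i) (x + d) = blk (S i) z"
    using blk_add_blockspace[OF i i d_in] by (simp add: d_def)
  have "model i x t = ereal (blk (S i) (gf x) \<bullet> t + L i / 2 * qq i t + Phi_val i (x + t))"
    using Psi_eq_Psi_val[OF dom_Psi_step[OF x i] i] by (intro model_eq_Phi_val[OF i t_in]) (simp add: t_def)
  moreover have "model i x d = ereal (blk (S i) (gf x) \<bullet> d + L i / 2 * qq i d + Phi_val i (x + d))"
    using Psi_eq_Psi_val[OF z i] blk_xd by (intro model_eq_Phi_val[OF i d_in]) simp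
  moreover have "Phi_val i (x + d) = Phi_val i z"
    using blk_xd by (simp add: Phi_val_def Psi_val_def)
  moreover have "model i x t \<le> model i x d" using model_T_le[OF i d_in] by (simp add: t_def)
  ultimately have model_le: "blk (S i) (gf x) \<bullet> t + L i / 2 * qq i t + Phi_val i (x + t)
      \<le> blk (S i) (gf x) \<bullet> d + L i / 2 * qq i d + Phi_val i z"
    by simp
  have "f (x + t) \<le> f x + blk (S i) (gf x) \<bullet> t + L i / 2 * qq i t"
    using f_block_descent[OF i t_in, of x] inner_blk_blockspace[OF t_in, of "gf x"] by simp
  moreover have "(\<Sum>j\<in>{..<n}-{i}. Phi_val j (x + t)) = (\<Sum>j\<in>{..<n}-{i}. Phi_val j x)"
    using t_in i by (intro sum.cong refl) (auto simp: Phi_val_def Psi_val_def blk_add_blockspace)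
  moreover have "Fmu (x + t) = f (x + t) + Phi_val i (x + t) + (\<Sum>j\<in>{..<n}-{i}. Phi_val j (x + t))"
    using i by (simp add: Fmu_def sum.remove)
  ultimately show ?thesis using model_le by (simp add: t_def d_def)
qed

lemma Psi_convex_comb:
  assumes x: "dom_Psi x" and y: "dom_Psi y" and a: "0 \<le> a" "a \<le> 1" and i: "i < n"
  shows "\<Psi> i (blk (S i) (a *\<^sub>R y + (1 - a) *\<^sub>R x)) \<le> ereal (a * Psi_val i y + (1 - a) * Psi_val i x)"
proof -
  define E where "E = {(t, z::real). t \<in> blockspace (S i) \<and> \<Psi> i t \<le> ereal z}"
  have "convex E" using \<Psi>pcc i unfolding proper_closed_convex_on_def E_def by blast
  moreover have "(blk (S i) y, Psi_val i y) \<in> E" "(blk (S i) x, Psi_val i x) \<in> E"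
    using Psi_eq_Psi_val[OF y i] Psi_eq_Psi_val[OF x i] by (auto simp: E_def blk_in_blockspace)
  ultimately have "a *\<^sub>R (blk (S i) y, Psi_val i y) + (1 - a) *\<^sub>R (blk (S i) x, Psi_val i x) \<in> E"
    using a by (intro convexD) auto
  moreover have "blk (S i) (a *\<^sub>R y + (1 - a) *\<^sub>R x) = a *\<^sub>R blk (S i) y + (1 - a) *\<^sub>R blk (S i) x"
    by (simp only: blk_add blk_scaleR)
  ultimately show ?thesis by (simp add: E_def)
qed

lemma dom_Psi_convex_comb:
  assumes "dom_Psi x" "dom_Psi y" "0 \<le> a" "a \<le> 1"
  shows "dom_Psi (a *\<^sub>R y + (1 - a) *\<^sub>R x)"
  unfolding dom_Psi_def
proof (intro allI impI)
  fix i assume "i < n"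
  then show "\<Psi> i (blk (S i) (a *\<^sub>R y + (1 - a) *\<^sub>R x)) \<noteq> \<infinity>"
    using Psi_convex_comb[OF assms] by fastforce
qed

text \<open>Convexity of \<Psi>_i plus the parallelogram identity for the proximal term: \<Phi>_i is
  \<mu> L_i-strongly convex in the block norm.\<close>
lemma Phi_val_convex_comb:
  assumes x: "dom_Psi x" and y: "dom_Psi y" and a: "0 \<le> a" "a \<le> 1" and i: "i < n"
  defines "z \<equiv> a *\<^sub>R y + (1 - a) *\<^sub>R x"
  shows "Phi_val i z \<le> a * Phi_val i y + (1 - a) * Phi_val i x
           - a * (1 - a) * (\<mu> / 2 * L i * qq i (blk (S i) y - blk (S i) x))"
proof -
  have sym: "\<forall>a\<in>S i. \<forall>b\<in>S i. B i $ a $ b = B i $ b $ a"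
    using pos_def_B[OF i] by (simp add: pos_def_on_def)
  have z_x0: "blk (S i) z - blk (S i) x0 = a *\<^sub>R (blk (S i) y - blk (S i) x0)
      + (1 - a) *\<^sub>R (blk (S i) x - blk (S i) x0)"
    unfolding z_def blk_add blk_scaleR by (simp add: algebra_simps)
  have qq_z: "qq i (blk (S i) z - blk (S i) x0) = a * qq i (blk (S i) y - blk (S i) x0)
      + (1 - a) * qq i (blk (S i) x - blk (S i) x0) - a * (1 - a) * qq i (blk (S i) y - blk (S i) x)"
    unfolding z_x0 qform_convex_comb[OF sym] by simp
  have "a * Phi_val i y + (1 - a) * Phi_val i x
      - a * (1 - a) * (\<mu> / 2 * L i * qq i (blk (S i) y - blk (S i) x)) - Phi_val i z
      = a * Psi_val i y + (1 - a) * Psi_val i x - Psi_val i z"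
    unfolding Phi_val_def qq_z by (simp add: field_simps)
  moreover have "Psi_val i z \<le> a * Psi_val i y + (1 - a) * Psi_val i x"
    using Psi_convex_comb[OF x y a i] Psi_eq_Psi_val[OF dom_Psi_convex_comb[OF x y a] i]
    by (simp add: z_def)
  ultimately show ?thesis by linarith
qed

definition alpha :: real where
  "alpha = \<mu> / (1 + \<mu>)"

lemma alpha: "0 < alpha" "alpha < 1" "alpha^2 = alpha * (1 - alpha) * \<mu>"
  using mu_pos by (auto simp: alpha_def field_simps power2_eq_square)

text \<open>The expected one-step progress: averaging the step bound over the n blocks, with z
  the convex combination of x and y of weight alpha, where the strong convexity of the
  proximal term exactly pays for the quadratic upper bound of f.\<close>
lemma sum_Fmu_step_le:
  assumes x: "dom_Psi x" and y: "dom_Psi y"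
  shows "(\<Sum>i<n. Fmu (x + T i x)) \<le> (real n - alpha) * Fmu x + alpha * Fmu y"
proof -
  define z where "z = alpha *\<^sub>R y + (1 - alpha) *\<^sub>R x"
  define Dq where "Dq = (\<Sum>i<n. L i * qq i (blk (S i) y - blk (S i) x))"
  define Px where "Px = (\<Sum>i<n. Phi_val i x)"
  define Py where "Py = (\<Sum>i<n. Phi_val i y)"
  have a01: "0 \<le> alpha" "alpha \<le> 1" using alpha by auto
  have z: "dom_Psi z" using dom_Psi_convex_comb[OF x y a01] by (simp add: z_def)
  have blk_zx: "blk (S i) z - blk (S i) x = alpha *\<^sub>R (blk (S i) y - blk (S i) x)" for i
    unfolding z_def blk_add blk_scaleR by (simp add: algebra_simps)
  have "(\<Sum>i<n. Fmu (x + T i x)) \<le> (\<Sum>i<n. f x + blk (S i) (gf x) \<bullet> (blk (S i) z - blk (S i) x)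
      + L i / 2 * qq i (blk (S i) z - blk (S i) x) + Phi_val i z + (\<Sum>j\<in>{..<n}-{i}. Phi_val j x))"
    by (intro sum_mono Fmu_step_le[OF x z]) simp
  also have "\<dots> = real n * f x + (\<Sum>i<n. blk (S i) (gf x) \<bullet> blk (S i) (z - x))
      + (\<Sum>i<n. L i / 2 * qq i (blk (S i) z - blk (S i) x)) + (\<Sum>i<n. Phi_val i z)
      + (\<Sum>i<n. \<Sum>j\<in>{..<n}-{i}. Phi_val j x)"
    by (simp add: sum.distrib blk_diff)
  also have "(\<Sum>i<n. blk (S i) (gf x) \<bullet> blk (S i) (z - x)) = alpha * (gf x \<bullet> (y - x))"
    by (simp add: sum_inner_blk z_def algebra_simps inner_diff_right)
  also have "(\<Sum>i<n. L i / 2 * qq i (blk (S i) z - blk (S i) x)) = alpha^2 / 2 * Dq"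
    by (simp add: blk_zx qform_scaleR Dq_def sum_distrib_left mult_ac)
  also have "(\<Sum>i<n. \<Sum>j\<in>{..<n}-{i}. Phi_val j x) = (real n - 1) * Px"
    by (simp add: sum_sum_Diff_singleton Px_def)
  also have "(\<Sum>i<n. Phi_val i z) \<le> alpha * Py + (1 - alpha) * Px - alpha * (1 - alpha) * \<mu> / 2 * Dq"
  proof -
    have "(\<Sum>i<n. Phi_val i z) \<le> (\<Sum>i<n. alpha * Phi_val i y + (1 - alpha) * Phi_val i x
      - alpha * (1 - alpha) * (\<mu> / 2 * L i * qq i (blk (S i) y - blk (S i) x)))"
      using Phi_val_convex_comb[OF x y a01] by (intro sum_mono) (simp add: z_def)
    then show ?thesis
      by (simp add: sum.distrib sum_subtractf sum_distrib_left Py_def Px_def Dq_def mult_ac)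
  qed
  finally have "(\<Sum>i<n. Fmu (x + T i x)) \<le> real n * f x + alpha * (gf x \<bullet> (y - x)) + alpha^2 / 2 * Dq
      + (alpha * Py + (1 - alpha) * Px - alpha * (1 - alpha) * \<mu> / 2 * Dq) + (real n - 1) * Px"
    by simp
  moreover have "alpha * (gf x \<bullet> (y - x)) \<le> alpha * (f y - f x)"
    using f_ge_tangent[of x y] a01 by (intro mult_left_mono) auto
  moreover have "alpha^2 / 2 * Dq = alpha * (1 - alpha) * \<mu> / 2 * Dq" using alpha(3) by simp
  moreover have "(real n - alpha) * Fmu x + alpha * Fmu y
     = real n * f x + alpha * (f y - f x) + alpha * Py + (1 - alpha) * Px + (real n - 1) * Px"
    by (simp add: Fmu_def Px_def Py_def algebra_simps)
  ultimately show ?thesis by linarith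
qed

definition Fmu_inf :: real where
  "Fmu_inf = Inf (Fmu ` Collect dom_Psi)"

lemma n_ge_alpha: "0 \<le> real n - alpha"
proof -
  have "1 \<le> real n" using n_pos by simp
  then show ?thesis using alpha(2) by linarith
qed

lemma Fmu_inf_le: "bdd_below (Fmu ` Collect dom_Psi) \<Longrightarrow> dom_Psi y \<Longrightarrow> Fmu_inf \<le> Fmu y"
  unfolding Fmu_inf_def by (intro cInf_lower) auto

lemma le_Fmu_inf: "dom_Psi x0 \<Longrightarrow> (\<And>y. dom_Psi y \<Longrightarrow> c \<le> Fmu y) \<Longrightarrow> c \<le> Fmu_inf"
  unfolding Fmu_inf_def by (intro cInf_greatest) auto

lemma sum_Fmu_step_gap_le:
  assumes x: "dom_Psi x" and x0: "dom_Psi x0"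
  shows "(\<Sum>i<n. Fmu (x + T i x) - Fmu_inf) \<le> (real n - alpha) * (Fmu x - Fmu_inf)"
proof -
  define c where "c = ((\<Sum>i<n. Fmu (x + T i x)) - (real n - alpha) * Fmu x) / alpha"
  have "c \<le> Fmu_inf"
    using sum_Fmu_step_le[OF x] alpha(1) by (intro le_Fmu_inf[OF x0]) (simp add: c_def field_simps)
  then show ?thesis using alpha(1) by (simp add: c_def field_simps sum_subtractf)
qed

lemma run_Nil: "run [] = x0"
  and run_snoc: "run (is @ [i]) = run is + T i (run is)"
  by (simp_all add: ucdc_run_def ucdc_step_def)

lemma dom_Psi_run: "dom_Psi x0 \<Longrightarrow> is \<in> choice_seqs n k \<Longrightarrow> dom_Psi (run is)"
proof (induction "is" arbitrary: k rule: rev_induct)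
  case (snoc i "is")
  then show ?case
    by (auto simp: run_snoc choice_seqs_def intro!: dom_Psi_step snoc.IH[of "length is"])
qed (simp add: run_Nil)

lemma sum_Fmu_run_gap_le:
  assumes x0: "dom_Psi x0"
  shows "(\<Sum>is\<in>choice_seqs n k. Fmu (run is) - Fmu_inf) \<le> (real n - alpha) ^ k * (Fmu x0 - Fmu_inf)"
proof (induction k)
  case 0
  have "choice_seqs n 0 = {[]}" by (auto simp: choice_seqs_def)
  then show ?case by (simp add: run_Nil)
next
  case (Suc k)
  have "(\<Sum>is\<in>choice_seqs n (Suc k). Fmu (run is) - Fmu_inf)
      = (\<Sum>is\<in>choice_seqs n k. \<Sum>i<n. Fmu (run is + T i (run is)) - Fmu_inf)"
    by (simp add: sum_choice_seqs_Suc run_snoc)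
  also have "\<dots> \<le> (\<Sum>is\<in>choice_seqs n k. (real n - alpha) * (Fmu (run is) - Fmu_inf))"
    by (intro sum_mono sum_Fmu_step_gap_le dom_Psi_run x0)
  also have "\<dots> = (real n - alpha) * (\<Sum>is\<in>choice_seqs n k. Fmu (run is) - Fmu_inf)"
    by (simp add: sum_distrib_left)
  also have "\<dots> \<le> (real n - alpha) * ((real n - alpha) ^ k * (Fmu x0 - Fmu_inf))"
    using Suc.IH n_ge_alpha by (rule mult_left_mono)
  finally show ?case by simp
qed

lemma Fmu_run_tail_bound:
  assumes x0: "dom_Psi x0" and bdd: "bdd_below (Fmu ` Collect dom_Psi)" and d: "0 < d"
  shows "1 - (1 - alpha / n) ^ k * (Fmu x0 - Fmu_inf) / d
      \<le> measure_pmf.prob (pmf_of_set (choice_seqs n k)) {is\<in>choice_seqs n k. Fmu (run is) - Fmu_inf \<le> d}"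
proof -
  have "(\<Sum>is\<in>choice_seqs n k. Fmu (run is) - Fmu_inf) / (d * card (choice_seqs n k))
      \<le> (real n - alpha) ^ k * (Fmu x0 - Fmu_inf) / (d * real n ^ k)"
    unfolding card_choice_seqs of_nat_power
    using sum_Fmu_run_gap_le[OF x0] d n_pos by (intro divide_right_mono) auto
  also have "\<dots> = ((real n - alpha) / n) ^ k * (Fmu x0 - Fmu_inf) / d"
    using n_pos by (simp add: power_divide)
  also have "(real n - alpha) / n = 1 - alpha / n"
    using n_pos by (simp add: diff_divide_distrib)
  finally have mean: "(\<Sum>is\<in>choice_seqs n k. Fmu (run is) - Fmu_inf) / (d * card (choice_seqs n k))
      \<le> (1 - alpha / n) ^ k * (Fmu x0 - Fmu_inf) / d" .
  have "card (choice_seqs n k) \<noteq> 0" using n_pos by (simp add: card_choice_seqs)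
  then have ne: "choice_seqs n k \<noteq> {}" by auto
  have nonneg: "0 \<le> Fmu (run is) - Fmu_inf" if "is \<in> choice_seqs n k" for "is"
    using Fmu_inf_le[OF bdd dom_Psi_run[OF x0 that]] by simp
  show ?thesis
    using prob_pmf_of_set_Markov[where g = "\<lambda>is. Fmu (run is) - Fmu_inf", OF finite_choice_seqs ne nonneg d] mean by linarith
qed

lemma Fmu_eq_Fval: "Fmu x = Fval x + \<mu> / 2 * (Lnorm n S B L (x0 - x))^2"
proof -
  have "qq i (blk (S i) x - blk (S i) x0) = (bnorm (B i) (S i) (blk (S i) (x0 - x)))^2" if "i < n" for i
    using qform_minus[of "B i" "S i" "blk (S i) x0 - blk (S i) x"] by (simp add: blk_diff bnorm_power2[OF pos_def_B[OF that]])
  moreover have "0 \<le> (\<Sum>i<n. L i * (bnorm (B i) (S i) (blk (S i) (x0 - x)))^2)"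
    using Lpos by (intro sum_nonneg) (simp add: less_imp_le)
  ultimately show ?thesis
    by (simp add: Fmu_def Fval_def Phi_val_def Lnorm_def sum.distrib sum_distrib_left mult_ac)
qed

lemma Fmu_x0: "Fmu x0 = Fval x0"
  by (simp add: Fmu_def Fval_def Phi_val_def qform_def)

text \<open>Back to F: F_\<mu> \<ge> F, F_\<mu> agrees with F at x0, and exceeds it at a minimizer x* by
  \<mu>/2 ||x0 - x*||_L^2; so a point that is d-optimal for F_\<mu> is (d + \<mu>/2 ||x0 - x*||_L^2)-optimal for F.\<close>
lemma F_gap_tail_bound:
  fixes F :: "real^'n \<Rightarrow> ereal"
  assumes F: "\<And>x. F x = ereal (f x) + (\<Sum>i<n. \<Psi> i (blk (S i) x))"
    and xstar: "\<And>y. F xstar \<le> F y" and Fx0: "F x0 < \<infinity>"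
    and eps: "0 < \<epsilon>" "\<mu> / 2 * (Lnorm n S B L (x0 - xstar))^2 \<le> \<epsilon> / 2"
  shows "1 - (1 - alpha / n) ^ k * real_of_ereal (F x0 - F xstar) / (\<epsilon> / 2)
      \<le> measure_pmf.prob (pmf_of_set (choice_seqs n k)) {is. F (run is) - F xstar \<le> ereal \<epsilon>}"
proof -
  have F_dom: "dom_Psi x" if "F x < \<infinity>" for x
    using that F sum_Pinfty[of "\<lambda>i. \<Psi> i (blk (S i) x)" "{..<n}"] unfolding dom_Psi_def by force
  have F_Fval: "F x = ereal (Fval x)" if "dom_Psi x" for x
    using that by (simp add: F Fval_def Psi_eq_Psi_val)
  have x0: "dom_Psi x0" using F_dom[OF Fx0] .
  have xs: "dom_Psi xstar" using F_dom[OF le_less_trans[OF xstar Fx0]] .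
  have xs_min: "Fval xstar \<le> Fval y" if "dom_Psi y" for y
    using xstar[of y] by (simp add: F_Fval that xs)
  have Fval_le_Fmu: "Fval y \<le> Fmu y" for y
    using mu_pos by (simp add: Fmu_eq_Fval)
  have lower: "Fval xstar \<le> Fmu y" if "dom_Psi y" for y
    using xs_min[OF that] Fval_le_Fmu[of y] by linarith
  then have bdd: "bdd_below (Fmu ` Collect dom_Psi)"
    by (intro bdd_belowI[of _ "Fval xstar"]) auto
  have "Fval xstar \<le> Fmu_inf" by (rule le_Fmu_inf[OF x0 lower])
  then have "Fmu x0 - Fmu_inf \<le> real_of_ereal (F x0 - F xstar)"
    by (simp add: F_Fval[OF x0] F_Fval[OF xs] Fmu_x0)
  moreover have "alpha / n \<le> 1"
    using alpha n_pos by (simp add: divide_le_eq_1)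
  then have "0 \<le> (1 - alpha / n) ^ k" by simp
  ultimately have "(1 - alpha / n) ^ k * (Fmu x0 - Fmu_inf) / (\<epsilon> / 2)
      \<le> (1 - alpha / n) ^ k * real_of_ereal (F x0 - F xstar) / (\<epsilon> / 2)"
    using eps(1) by (intro divide_right_mono mult_left_mono) auto
  then have step1: "1 - (1 - alpha / n) ^ k * real_of_ereal (F x0 - F xstar) / (\<epsilon> / 2)
      \<le> 1 - (1 - alpha / n) ^ k * (Fmu x0 - Fmu_inf) / (\<epsilon> / 2)"
    by (rule diff_left_mono)
  have step2: "1 - (1 - alpha / n) ^ k * (Fmu x0 - Fmu_inf) / (\<epsilon> / 2) \<le> measure_pmf.prob
      (pmf_of_set (choice_seqs n k)) {is\<in>choice_seqs n k. Fmu (run is) - Fmu_inf \<le> \<epsilon> / 2}"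
    using eps(1) by (intro Fmu_run_tail_bound[OF x0 bdd]) simp
  have "Fmu_inf \<le> Fval xstar + \<epsilon> / 2"
    using Fmu_inf_le[OF bdd xs] eps(2) by (simp add: Fmu_eq_Fval)
  have "{is\<in>choice_seqs n k. Fmu (run is) - Fmu_inf \<le> \<epsilon> / 2}
      \<subseteq> {is. F (run is) - F xstar \<le> ereal \<epsilon>}"
  proof clarify
    fix "is" assume "is \<in> choice_seqs n k" and "Fmu (run is) - Fmu_inf \<le> \<epsilon> / 2"
    with \<open>Fmu_inf \<le> Fval xstar + \<epsilon> / 2\<close> have "Fval (run is) - Fval xstar \<le> \<epsilon>"
      using Fval_le_Fmu[of "run is"] by linarith
    then show "F (run is) - F xstar \<le> ereal \<epsilon>"
      using F_Fval[OF dom_Psi_run[OF x0 \<open>is \<in> choice_seqs n k\<close>]] F_Fval[OF xs] by simp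
  qed
  then have step3: "measure_pmf.prob (pmf_of_set (choice_seqs n k))
        {is\<in>choice_seqs n k. Fmu (run is) - Fmu_inf \<le> \<epsilon> / 2}
      \<le> measure_pmf.prob (pmf_of_set (choice_seqs n k)) {is. F (run is) - F xstar \<le> ereal \<epsilon>}"
    by (rule measure_pmf.finite_measure_mono) simp
  show ?thesis by (rule order_trans[OF order_trans[OF step1 step2] step3])
qed

end

theorem theorem9:
  fixes n :: nat and S :: "nat \<Rightarrow> 'n::finite set"
    and B Binv :: "nat \<Rightarrow> real^'n^'n" and L :: "nat \<Rightarrow> real"
    and f :: "real^'n \<Rightarrow> real" and gf :: "real^'n \<Rightarrow> real^'n"
    and \<Psi> :: "nat \<Rightarrow> real^'n \<Rightarrow> ereal"
    and F :: "real^'n \<Rightarrow> ereal"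
    and xstar x0 :: "real^'n" and \<epsilon> \<rho> :: real and k :: nat
  assumes part: "block_partition n S"
    and Bpd: "\<forall>i<n. pos_def_on (S i) (B i)"
    and Binv: "\<forall>i<n. inverse_on (S i) (B i) (Binv i)"
    and Lpos: "\<forall>i<n. L i > 0"
    and fconv: "convex_on UNIV f"
    and fgrad: "\<forall>x. (f has_derivative (\<lambda>h. gf x \<bullet> h)) (at x)"
    and fLip: "\<forall>i<n. \<forall>x. \<forall>t\<in>blockspace (S i).
                 sqrt (qform (Binv i) (S i) (blk (S i) (gf (x + t)) - blk (S i) (gf x)))
                   \<le> L i * bnorm (B i) (S i) t"
    and \<Psi>pcc: "\<forall>i<n. proper_closed_convex_on (S i) (\<Psi> i)"
    and F_def: "\<forall>x. F x = ereal (f x) + (\<Sum>i<n. \<Psi> i (blk (S i) x))"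
    and xstar: "\<forall>y. F xstar \<le> F y"
    and Fx0: "F x0 < \<infinity>"
    and eps: "0 < \<epsilon>" "\<epsilon> \<le> 2 * (Lnorm n S B L (x0 - xstar))^2"
    and rho: "0 < \<rho>" "\<rho> < 1"
    and k: "real k \<ge> 4 * real n * (Lnorm n S B L (x0 - xstar))^2 / \<epsilon>
                       * ln (2 * real_of_ereal (F x0 - F xstar) / (\<rho> * \<epsilon>))"
  shows "let \<mu> = \<epsilon> / (Lnorm n S B L (x0 - xstar))^2;
             \<Phi> = (\<lambda>i t. \<Psi> i t + ereal (\<mu> / 2 * L i * (bnorm (B i) (S i) (t - blk (S i) x0))^2))
         in measure_pmf.prob (pmf_of_set (choice_seqs n k))
              {is. F (ucdc_run gf L B S \<Phi> x0 is) - F xstar \<le> ereal \<epsilon>} \<ge> 1 - \<rho>"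
proof -
  define Ln where "Ln = Lnorm n S B L (x0 - xstar)"
  define \<mu> where "\<mu> = \<epsilon> / Ln^2"
  define \<Phi> where "\<Phi> = (\<lambda>i t. \<Psi> i t + ereal (\<mu> / 2 * L i * (bnorm (B i) (S i) (t - blk (S i) x0))^2))"
  define \<Delta> where "\<Delta> = real_of_ereal (F x0 - F xstar)"
  have Ln: "0 < Ln^2" using eps unfolding Ln_def[symmetric] by linarith
  have mu: "0 < \<mu>" "\<mu> \<le> 2" "\<mu> / 2 * Ln^2 = \<epsilon> / 2" "4 * real n / \<mu> = 4 * real n * Ln^2 / \<epsilon>"
    using Ln eps by (simp_all add: \<mu>_def Ln_def field_simps)
  interpret regularized_ucdc n S B Binv L f gf \<Psi> x0 \<mu> \<Phi>
    by unfold_locales (use part Bpd Binv Lpos fconv fgrad fLip \<Psi>pcc mu \<Phi>_def in auto)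
  have "1 - (1 - alpha / n) ^ k * \<Delta> / (\<epsilon> / 2)
      \<le> measure_pmf.prob (pmf_of_set (choice_seqs n k)) {is. F (run is) - F xstar \<le> ereal \<epsilon>}"
    unfolding \<Delta>_def using F_def xstar Fx0 eps(1) mu(3) by (intro F_gap_tail_bound) (auto simp: Ln_def)
  moreover have "(1 - alpha / n) ^ k * (2 * \<Delta> / \<epsilon>) \<le> \<rho>"
    unfolding alpha_def
  proof (rule contraction_power_le)
    show "0 \<le> \<Delta>"
      using xstar[rule_format, of x0] Fx0 by (cases "F x0"; cases "F xstar") (auto simp: \<Delta>_def)
  qed (use n_pos mu eps rho k in \<open>auto simp: \<Delta>_def Ln_def\<close>)
  ultimately show ?thesis
    unfolding Let_def \<Phi>_def[symmetric] \<mu>_def[unfolded Ln_def, symmetric] by simp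
qed
end
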